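(* Let $A\in\mathcal{S}_n$. Then $A\in\operatorname{int}(\mathcal{C}_n)$ if and only if $\operatorname{rank}(A)=n$ and there exist $b_1\in\mathbb{R}^n_{++}$ and $\lambda>0$ such that $A-\lambda b_1b_1^T\in\mathcal{C}_n$.
   Context: $\mathcal{S}_n$: real symmetric $n\times n$ matrices. $\mathcal{C}_n=\{BB^T: B\in\mathbb{R}^{n\times m}\text{ entrywise nonnegative},\ m\ge1\}$ is the completely positive cone, with interior taken in $\mathcal{S}_n$. $\mathbb{R}^n_{++}=\{x\in\mathbb{R}^n: x>0\text{ entrywise}\}$. *)

theory Defs
  imports "HOL-Analysis.Analysis"
begin

definition sym_mats :: "(real^'n^'n) set" where
  "sym_mats = {A. transpose A = A}"

definition outer :: "real^'n \<Rightarrow> real^'n \<Rightarrow> real^'n^'n" where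
  "outer x y = (\<chi> i j. x $ i * y $ j)"

text \<open>Completely positive cone: B B^T with B an entrywise nonnegative n x m matrix, m \<ge> 1;
  B B^T is written as the sum of the outer products of the columns b 0, ..., b (m-1) of B.\<close>
definition cp_cone :: "(real^'n^'n) set" where
  "cp_cone = {A. \<exists>m::nat. m \<ge> 1 \<and> (\<exists>b :: nat \<Rightarrow> real^'n.
      (\<forall>k<m. \<forall>i. b k $ i \<ge> 0) \<and> A = (\<Sum>k<m. outer (b k) (b k)))}"

end

theory Submission
  imports Defs
begin

(* Necessity.  If a whole ball of symmetric matrices around A lies in C_n, then
   A - t x x^T is completely positive for every x and small t > 0.  Taking x in the
   kernel of A contradicts positive semidefiniteness of C_n, so A has full rank;
   taking x = (1,...,1) gives the required b.

   Sufficiency.  Write A = sum_k w_k w_k^T with nonnegative w_k, where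
   w_0 = sqrt lam * b.  Since A is invertible, every matrix E expands in this
   frame: E = sum_{k,l} H_kl w_k w_l^T with H_kl = (A^-1 w_k) . E (A^-1 w_l).  For
   symmetric E each pair term H_kl (w_k w_l^T + w_l w_k^T) / 2 is a sign-indefinite
   combination of rank-one matrices; it is completely positive once a small share
   of w_k w_k^T + w_l w_l^T and a small multiple of b b^T are added, because
   b > 0 absorbs the negative entries.  When E is small all H_kl are small, and
   half of A plus half of lam b b^T pays for every pair term. *)


section \<open>The completely positive cone\<close>

lemma outer_nth [simp]: "outer x y $ i $ j = x $ i * y $ j"
  by (simp add: outer_def)

lemma cp_coneI:
  fixes m :: nat
  assumes "1 \<le> m" "\<And>k i. k < m \<Longrightarrow> 0 \<le> b k $ i" "A = (\<Sum>k<m. outer (b k) (b k))"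
  shows "A \<in> cp_cone"
  using assms unfolding cp_cone_def by blast

lemma cp_coneE:
  assumes "(A :: real^'n^'n) \<in> cp_cone"
  obtains m :: nat and b :: "nat \<Rightarrow> real^'n"
  where "1 \<le> m" "\<And>k i. k < m \<Longrightarrow> 0 \<le> b k $ i" "A = (\<Sum>k<m. outer (b k) (b k))"
  using assms unfolding cp_cone_def by auto

lemma cp_outer:
  assumes "\<And>i. 0 \<le> x $ i"
  shows "outer x x \<in> cp_cone"
  by (rule cp_coneI[of 1 "\<lambda>_. x"]) (use assms in \<open>simp_all add: lessThan_Suc\<close>)

lemma cp_zero: "0 \<in> cp_cone"
  using cp_outer[of 0] by (simp add: outer_def zero_vec_def)

lemma cp_add:
  assumes "A \<in> cp_cone" "B \<in> cp_cone"
  shows "A + B \<in> cp_cone"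
proof -
  obtain m :: nat and b where m: "1 \<le> m" "\<And>k i. k < m \<Longrightarrow> 0 \<le> b k $ i"
      "A = (\<Sum>k<m. outer (b k) (b k))"
    using assms(1) by (elim cp_coneE) blast
  obtain m' :: nat and b' where m': "\<And>k i. k < m' \<Longrightarrow> 0 \<le> b' k $ i"
      "B = (\<Sum>k<m'. outer (b' k) (b' k))"
    using assms(2) by (elim cp_coneE) blast
  define c where "c k = (if k < m then b k else b' (k - m))" for k
  have "(\<Sum>k<m + m'. outer (c k) (c k))
      = (\<Sum>k<m. outer (c k) (c k)) + (\<Sum>k<m'. outer (c (m + k)) (c (m + k)))"
    by (induction m') (simp_all add: add.assoc)
  also have "\<dots> = A + B"
    using m m' by (simp add: c_def)
  finally show ?thesis
    using m m' by (intro cp_coneI[of "m + m'" c]) (auto simp: c_def)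
qed

lemma cp_scale:
  assumes "A \<in> cp_cone" "0 \<le> t"
  shows "t *\<^sub>R A \<in> cp_cone"
proof -
  obtain m :: nat and b where m: "1 \<le> m" "\<And>k i. k < m \<Longrightarrow> 0 \<le> b k $ i"
      "A = (\<Sum>k<m. outer (b k) (b k))"
    using assms(1) by (elim cp_coneE) blast
  have scale: "outer (sqrt t *\<^sub>R x) (sqrt t *\<^sub>R x) = t *\<^sub>R outer x x" for x :: "real^'n"
    using assms(2) by (simp add: vec_eq_iff algebra_simps flip: power2_eq_square)
  have "t *\<^sub>R A = (\<Sum>k<m. outer (sqrt t *\<^sub>R b k) (sqrt t *\<^sub>R b k))"
    by (simp only: m(3) scaleR_sum_right scale)
  then show ?thesis
    using m assms(2) by (intro cp_coneI[of m "\<lambda>k. sqrt t *\<^sub>R b k"]) auto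
qed

lemma cp_sum:
  assumes "finite K" "\<And>k. k \<in> K \<Longrightarrow> f k \<in> cp_cone"
  shows "(\<Sum>k\<in>K. f k) \<in> cp_cone"
  using assms by (induction K rule: finite_induct) (auto intro: cp_zero cp_add)

lemma sum_matrix_vector_mult: "(\<Sum>k\<in>K. f k) *v x = (\<Sum>k\<in>K. f k *v x)"
  by (induction K rule: infinite_finite_induct) (simp_all add: matrix_vector_mult_add_rdistrib)

lemma scaleR_matrix_vector_mult: "(t *\<^sub>R (M :: real^'n^'m)) *v x = t *\<^sub>R (M *v x)"
  by (simp add: vec_eq_iff matrix_vector_mult_def sum_distrib_left mult.assoc)

lemma outer_mult_vector [simp]: "outer x y *v z = (y \<bullet> z) *\<^sub>R x"
  by (simp add: vec_eq_iff matrix_vector_mult_def inner_vec_def sum_distrib_left algebra_simps)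

lemma cp_psd:
  assumes "A \<in> cp_cone"
  shows "0 \<le> x \<bullet> (A *v x)"
proof -
  obtain m :: nat and b where "A = (\<Sum>k<m. outer (b k) (b k))"
    using assms by (elim cp_coneE) blast
  then have "x \<bullet> (A *v x) = (\<Sum>k<m. (b k \<bullet> x)\<^sup>2)"
    by (simp add: sum_matrix_vector_mult inner_sum_right inner_commute power2_eq_square)
  then show ?thesis
    by (simp add: sum_nonneg)
qed


section \<open>Interior points and the necessity of the condition\<close>

lemma sym_mats_iff: "A \<in> sym_mats \<longleftrightarrow> (\<forall>i j. A $ i $ j = A $ j $ i)"
  by (auto simp: sym_mats_def transpose_def vec_eq_iff)

lemma interior_cp_iff:
  assumes "A \<in> sym_mats"
  shows "A \<in> (top_of_set sym_mats) interior_of cp_cone \<longleftrightarrow>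
    (\<exists>e>0. \<forall>A'\<in>sym_mats. dist A' A < e \<longrightarrow> A' \<in> cp_cone)"
proof
  assume "A \<in> (top_of_set sym_mats) interior_of cp_cone"
  then obtain T where "openin (top_of_set sym_mats) T" "A \<in> T" "T \<subseteq> cp_cone"
    unfolding interior_of_def by blast
  then show "\<exists>e>0. \<forall>A'\<in>sym_mats. dist A' A < e \<longrightarrow> A' \<in> cp_cone"
    unfolding openin_euclidean_subtopology_iff by blast
next
  assume "\<exists>e>0. \<forall>A'\<in>sym_mats. dist A' A < e \<longrightarrow> A' \<in> cp_cone"
  then obtain e where e: "e > 0" "\<forall>A'\<in>sym_mats. dist A' A < e \<longrightarrow> A' \<in> cp_cone"
    by blast
  have "openin (top_of_set sym_mats) (sym_mats \<inter> ball A e)"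
    by auto
  moreover have "A \<in> sym_mats \<inter> ball A e" "sym_mats \<inter> ball A e \<subseteq> cp_cone"
    using assms e by (auto simp: dist_commute)
  ultimately show "A \<in> (top_of_set sym_mats) interior_of cp_cone"
    unfolding interior_of_def by blast
qed

lemma interior_cp_subtract_outer:
  assumes "A \<in> sym_mats" "0 < e" "\<forall>A'\<in>sym_mats. dist A' A < e \<longrightarrow> A' \<in> cp_cone"
  obtains t where "0 < t" "A - t *\<^sub>R outer x x \<in> cp_cone"
proof
  define N where "N = norm (outer x x)"
  define t where "t = e / (2 * (N + 1))"
  have N: "0 \<le> N"
    by (simp add: N_def)
  show "0 < t"
    unfolding t_def using assms(2) N by (intro divide_pos_pos) auto
  have "dist (A - t *\<^sub>R outer x x) A = t * N"
    using \<open>0 < t\<close> by (simp add: dist_norm N_def)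
  also have "\<dots> < e"
    using assms(2) N by (simp add: t_def field_simps add_nonneg_pos)
  finally have "dist (A - t *\<^sub>R outer x x) A < e" .
  moreover have "A - t *\<^sub>R outer x x \<in> sym_mats"
    using assms(1) by (simp add: sym_mats_iff mult.commute)
  ultimately show "A - t *\<^sub>R outer x x \<in> cp_cone"
    using assms(3) by blast
qed

text \<open>Necessity: a kernel vector x would make x^T (A - t x x^T) x negative.\<close>

lemma interior_cp_necessary:
  fixes A :: "real^'n^'n"
  assumes "A \<in> sym_mats" "0 < e" "\<forall>A'\<in>sym_mats. dist A' A < e \<longrightarrow> A' \<in> cp_cone"
  shows "rank A = CARD('n) \<and>
    (\<exists>b1 :: real^'n. \<exists>lam::real. (\<forall>i. b1 $ i > 0) \<and> lam > 0 \<and>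
        A - lam *\<^sub>R outer b1 b1 \<in> cp_cone)"
proof
  show "rank A = CARD('n)"
  proof (rule ccontr)
    assume "rank A \<noteq> CARD('n)"
    then obtain x where x: "x \<noteq> 0" "A *v x = 0"
      using matrix_nonfull_linear_equations_eq by blast
    obtain t where t: "0 < t" "A - t *\<^sub>R outer x x \<in> cp_cone"
      using interior_cp_subtract_outer[OF assms] .
    have "x \<bullet> ((A - t *\<^sub>R outer x x) *v x) = - (t * (x \<bullet> x)\<^sup>2)"
      using x(2)
      by (simp add: matrix_vector_mult_diff_rdistrib scaleR_matrix_vector_mult power2_eq_square)
    moreover have "0 < t * (x \<bullet> x)\<^sup>2"
      using t(1) x(1) by simp
    ultimately show False
      using cp_psd[OF t(2), of x] by linarith
  qed
  obtain t where "0 < t" "A - t *\<^sub>R outer (\<chi> i. 1) (\<chi> i. 1) \<in> cp_cone"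
    using interior_cp_subtract_outer[OF assms] .
  then show "\<exists>b1 :: real^'n. \<exists>lam::real. (\<forall>i. b1 $ i > 0) \<and> lam > 0 \<and>
      A - lam *\<^sub>R outer b1 b1 \<in> cp_cone"
    by (intro exI[of _ "\<chi> i. 1"] exI[of _ t]) simp
qed


section \<open>Expanding a matrix in a frame\<close>

lemma transpose_outer [simp]: "transpose (outer x y) = outer y x"
  by (simp add: transpose_def vec_eq_iff mult.commute)

lemma transpose_sum: "transpose (\<Sum>k\<in>K. f k) = (\<Sum>k\<in>K. transpose (f k))"
  by (simp add: transpose_def vec_eq_iff)

lemma sum_matrix_mult_left: "(\<Sum>k\<in>K. f k) ** M = (\<Sum>k\<in>K. f k ** M)"
  by (induction K rule: infinite_finite_induct)
    (simp_all add: vec_eq_iff matrix_matrix_mult_def sum.distrib distrib_right)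

lemma sum_matrix_mult_right: "M ** (\<Sum>k\<in>K. f k) = (\<Sum>k\<in>K. M ** f k)"
  by (induction K rule: infinite_finite_induct) (simp_all add: matrix_add_ldistrib)

lemma matrix_mult_outer: "M ** outer x y = outer (M *v x) y"
  by (simp add: vec_eq_iff matrix_matrix_mult_def matrix_vector_mult_def sum_distrib_right mult.assoc)

lemma outer_matrix_mult: "outer x y ** M = outer x (y v* M)"
  by (simp add: vec_eq_iff matrix_matrix_mult_def vector_matrix_mult_def sum_distrib_left mult_ac)

lemma outer_mult_outer: "outer x y ** outer z u = (y \<bullet> z) *\<^sub>R outer x u"
  by (simp add: vec_eq_iff matrix_matrix_mult_def inner_vec_def sum_distrib_left sum_distrib_right
      mult_ac)

lemma outer_sandwich: "outer x y ** M ** outer z u = (y \<bullet> (M *v z)) *\<^sub>R outer x u"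
  by (subst outer_matrix_mult) (simp add: outer_mult_outer dot_lmul_matrix)

text \<open>If B is a left inverse of S = \<Sum>k w_k w_k^T, then both \<Sum>k w_k (B w_k)^T and its transpose
  are the identity, and sandwiching E between them expands E in the frame (w_k).\<close>

lemma frame_expansion:
  fixes w :: "nat \<Rightarrow> real^'n" and B E :: "real^'n^'n"
  assumes inverse: "B ** (\<Sum>k<p. outer (w k) (w k)) = mat 1"
  shows "E = (\<Sum>k<p. \<Sum>l<p. ((B *v w k) \<bullet> (E *v (B *v w l))) *\<^sub>R outer (w k) (w l))"
proof -
  define y where "y k = B *v w k" for k
  have left: "(\<Sum>l<p. outer (y l) (w l)) = mat 1"
    using inverse by (simp add: y_def sum_matrix_mult_right matrix_mult_outer)
  have right: "(\<Sum>k<p. outer (w k) (y k)) = mat 1"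
    using arg_cong[OF left, of transpose] by (simp add: transpose_sum)
  have "E = (\<Sum>k<p. outer (w k) (y k)) ** E ** (\<Sum>l<p. outer (y l) (w l))"
    by (simp add: left right)
  also have "\<dots> = (\<Sum>k<p. \<Sum>l<p. outer (w k) (y k) ** E ** outer (y l) (w l))"
    by (simp add: sum_matrix_mult_left sum_matrix_mult_right matrix_mul_assoc) (rule sum.swap)
  also have "\<dots> = (\<Sum>k<p. \<Sum>l<p. (y k \<bullet> (E *v y l)) *\<^sub>R outer (w k) (w l))"
    by (simp add: outer_sandwich)
  finally show ?thesis
    by (simp add: y_def)
qed


section \<open>Absorbing sign-indefinite terms\<close>

lemma symmetrize_outer:
  "h *\<^sub>R (outer x y + outer y x) =
     \<bar>h\<bar> *\<^sub>R outer (x + sgn h *\<^sub>R y) (x + sgn h *\<^sub>R y) - \<bar>h\<bar> *\<^sub>R (outer x x + outer y y)"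
  by (cases h "0 :: real" rule: linorder_cases) (simp_all add: vec_eq_iff algebra_simps)

text \<open>A nonnegative vector a dominating |v| absorbs v v^T, since
  a a^T + v v^T = ((a + v)(a + v)^T + (a - v)(a - v)^T) / 2.\<close>

lemma cp_absorb:
  assumes "\<And>i. \<bar>v $ i\<bar> \<le> a $ i"
  shows "outer a a + outer v v \<in> cp_cone"
proof -
  have "outer a a + outer v v = (1/2) *\<^sub>R outer (a + v) (a + v) + (1/2) *\<^sub>R outer (a - v) (a - v)"
    by (simp add: vec_eq_iff algebra_simps)
  moreover have "0 \<le> (a + v) $ i" "0 \<le> (a - v) $ i" for i
    using assms[of i] by (simp_all add: abs_le_iff)
  ultimately show ?thesis
    by (simp add: cp_add cp_scale cp_outer)
qed

lemma cp_pair_term: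
  fixes x y a :: "real^'n"
  assumes x: "\<And>i. 0 \<le> x $ i" and y: "\<And>i. 0 \<le> y $ i" and a: "\<And>i. 0 \<le> a $ i"
    and h_c: "\<bar>h\<bar> \<le> 2 * c"
    and h_a: "\<And>i. \<bar>h\<bar> * (x $ i + y $ i)\<^sup>2 \<le> 2 * (a $ i)\<^sup>2"
  shows "c *\<^sub>R (outer x x + outer y y) + outer a a + (h / 2) *\<^sub>R (outer x y + outer y x) \<in> cp_cone"
proof -
  define u where "u = x + sgn h *\<^sub>R y"
  define v where "v = sqrt (\<bar>h\<bar> / 2) *\<^sub>R u"
  have "outer v v = (\<bar>h\<bar> / 2) *\<^sub>R outer u u"
    by (simp add: v_def vec_eq_iff algebra_simps flip: power2_eq_square)
  then have "(h / 2) *\<^sub>R (outer x y + outer y x) = outer v v - (\<bar>h\<bar> / 2) *\<^sub>R (outer x x + outer y y)"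
    using arg_cong[OF symmetrize_outer[of h x y], of "scaleR (1/2)"]
    by (simp add: u_def scaleR_diff_right)
  then have split: "c *\<^sub>R (outer x x + outer y y) + outer a a + (h / 2) *\<^sub>R (outer x y + outer y x)
      = (c - \<bar>h\<bar> / 2) *\<^sub>R (outer x x + outer y y) + (outer a a + outer v v)"
    by (simp add: algebra_simps)
  have "\<bar>v $ i\<bar> \<le> a $ i" for i
  proof -
    have "\<bar>u $ i\<bar> \<le> x $ i + y $ i"
      using x[of i] y[of i] by (simp add: u_def sgn_if abs_le_iff)
    then have "(u $ i)\<^sup>2 \<le> (x $ i + y $ i)\<^sup>2"
      by (metis abs_ge_zero power2_abs power_mono)
    then have "\<bar>h\<bar> * (u $ i)\<^sup>2 \<le> 2 * (a $ i)\<^sup>2"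
      using h_a[of i] by (meson abs_ge_zero mult_left_mono order_trans)
    then have "(v $ i)\<^sup>2 \<le> (a $ i)\<^sup>2"
      by (simp add: v_def power_mult_distrib)
    then show ?thesis
      using a[of i] by (metis abs_of_nonneg abs_le_square_iff)
  qed
  then have "outer a a + outer v v \<in> cp_cone"
    by (rule cp_absorb)
  moreover have "(c - \<bar>h\<bar> / 2) *\<^sub>R (outer x x + outer y y) \<in> cp_cone"
    using h_c x y by (intro cp_scale cp_add cp_outer) auto
  ultimately show ?thesis
    unfolding split by (rule cp_add[rotated])
qed

text \<open>Summing the pair terms: a symmetric E with small frame coefficients H_kl is compensated by
  half of the frame matrix and p^2 a a^T; each of the p^2 pairs (k, l) receives the share
  1/(4p) of w_k w_k^T + w_l w_l^T and one copy of a a^T.\<close>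

lemma cp_perturbation:
  fixes w :: "nat \<Rightarrow> real^'n" and H :: "nat \<Rightarrow> nat \<Rightarrow> real" and E :: "real^'n^'n"
  assumes w: "\<And>k i. k < p \<Longrightarrow> 0 \<le> w k $ i" and a: "\<And>i. 0 \<le> a $ i"
    and E_sym: "transpose E = E"
    and E_expansion: "E = (\<Sum>k<p. \<Sum>l<p. H k l *\<^sub>R outer (w k) (w l))"
    and H_small: "\<And>k l. k < p \<Longrightarrow> l < p \<Longrightarrow> 2 * real p * \<bar>H k l\<bar> \<le> 1"
    and H_absorbed: "\<And>k l i. k < p \<Longrightarrow> l < p \<Longrightarrow> \<bar>H k l\<bar> * (w k $ i + w l $ i)\<^sup>2 \<le> 2 * (a $ i)\<^sup>2"
  shows "(1/2) *\<^sub>R (\<Sum>k<p. outer (w k) (w k)) + (real p)\<^sup>2 *\<^sub>R outer a a + E \<in> cp_cone"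
proof -
  define c where "c = 1 / (4 * real p)"
  define T where "T k l = c *\<^sub>R (outer (w k) (w k) + outer (w l) (w l)) + outer a a
      + (H k l / 2) *\<^sub>R (outer (w k) (w l) + outer (w l) (w k))" for k l
  have half: "(1/2) *\<^sub>R (\<Sum>k<p. outer (w k) (w k))
      = (\<Sum>k<p. \<Sum>l<p. c *\<^sub>R (outer (w k) (w k) + outer (w l) (w l)))"
  proof (cases "p = 0")
    case False
    have "(\<Sum>k<p. \<Sum>l<p. outer (w k) (w k)) = real p *\<^sub>R (\<Sum>k<p. outer (w k) (w k))"
      by (simp add: sum_constant_scaleR scaleR_sum_right del: sum_constant)
    moreover have "(\<Sum>k<p. \<Sum>l<p. outer (w l) (w l)) = real p *\<^sub>R (\<Sum>k<p. outer (w k) (w k))"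
      by (simp add: sum_constant_scaleR del: sum_constant)
    moreover have "(\<Sum>k<p. \<Sum>l<p. c *\<^sub>R (outer (w k) (w k) + outer (w l) (w l)))
        = c *\<^sub>R ((\<Sum>k<p. \<Sum>l<p. outer (w k) (w k)) + (\<Sum>k<p. \<Sum>l<p. outer (w l) (w l)))"
      by (simp add: sum.distrib scaleR_sum_right scaleR_add_right del: sum_constant)
    moreover have "c * real p + c * real p = 1/2"
      using False by (simp add: c_def)
    ultimately show ?thesis
      by (simp only: scaleR_add_right scaleR_scaleR flip: scaleR_add_left) simp
  qed simp
  have "transpose E = (\<Sum>k<p. \<Sum>l<p. H k l *\<^sub>R outer (w l) (w k))"
    by (simp add: E_expansion transpose_sum transpose_scalar)
  moreover have "E = (1/2) *\<^sub>R (E + transpose E)"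
    using E_sym by (metis scaleR_add_left scaleR_one field_sum_of_halves scaleR_add_right)
  ultimately have symmetrized:
    "E = (\<Sum>k<p. \<Sum>l<p. (H k l / 2) *\<^sub>R (outer (w k) (w l) + outer (w l) (w k)))"
    by (simp only: E_expansion[symmetric])
      (simp add: E_expansion sum.distrib scaleR_sum_right scaleR_add_right)
  have pair: "T k l \<in> cp_cone" if "k < p" "l < p" for k l
    unfolding T_def
  proof (rule cp_pair_term)
    show "\<bar>H k l\<bar> \<le> 2 * c"
      using H_small[OF that] that by (simp add: c_def field_simps)
  qed (use w a H_absorbed that in auto)
  have "(\<Sum>k<p. \<Sum>l<p. T k l) \<in> cp_cone"
    by (intro cp_sum) (auto intro: pair)
  moreover have "(1/2) *\<^sub>R (\<Sum>k<p. outer (w k) (w k)) + (real p)\<^sup>2 *\<^sub>R outer a a + E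
      = (\<Sum>k<p. \<Sum>l<p. T k l)"
    unfolding half symmetrized T_def
    by (simp add: sum.distrib sum_constant_scaleR power2_eq_square del: sum_constant)
  ultimately show ?thesis
    by simp
qed


section \<open>Quantitative estimates\<close>

lemma bilinear_form_bound:
  fixes M :: "real^'n^'m"
  shows "\<bar>y \<bullet> (M *v z)\<bar> \<le> real CARD('m) * real CARD('n) * norm M * norm y * norm z"
proof -
  have "onorm ((*v) M) \<le> real CARD('m) * real CARD('n) * norm M"
    by (rule onorm_le_matrix_component)
      (meson component_le_norm_cart Finite_Cartesian_Product.norm_nth_le order_trans)
  then have "norm (M *v z) \<le> real CARD('m) * real CARD('n) * norm M * norm z"
    by (meson onorm[OF matrix_vector_mul_bounded_linear] mult_right_mono norm_ge_zero order_trans)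
  then have "norm y * norm (M *v z) \<le> norm y * (real CARD('m) * real CARD('n) * norm M * norm z)"
    by (simp add: mult_left_mono)
  then show ?thesis
    using Cauchy_Schwarz_ineq2[of y "M *v z"] by (simp add: algebra_simps)
qed

lemma nonneg_dominated_by_positive:
  fixes p :: nat and w :: "nat \<Rightarrow> real^'n" and b :: "real^'n"
  assumes w: "\<And>k i. k < p \<Longrightarrow> 0 \<le> w k $ i" and b: "\<And>i. 0 < b $ i"
  obtains K where "\<And>k i. k < p \<Longrightarrow> w k $ i \<le> K * b $ i"
proof
  define K where "K = (\<Sum>k<p. \<Sum>i\<in>UNIV. w k $ i / b $ i)"
  have terms_nonneg: "0 \<le> w k $ i / b $ i" if "k < p" for k i
    using w[OF that] b[of i] by simp
  fix k i assume "k < p"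
  then have "w k $ i / b $ i \<le> (\<Sum>j\<in>UNIV. w k $ j / b $ j)"
    by (intro member_le_sum) (auto intro: terms_nonneg)
  also have "\<dots> \<le> K"
    unfolding K_def using \<open>k < p\<close> by (intro member_le_sum sum_nonneg) (auto intro: terms_nonneg)
  finally show "w k $ i \<le> K * b $ i"
    using b[of i] by (simp add: pos_divide_le_eq)
qed

lemma small_coefficient_absorbed:
  fixes h K q \<mu> x y \<beta> :: real
  assumes h: "0 \<le> h" "h \<le> \<mu> / (2 * q * (K\<^sup>2 + 1))" and q: "0 < q" and \<mu>: "0 \<le> \<mu>"
    and x: "0 \<le> x" "x \<le> K * \<beta>" and y: "0 \<le> y" "y \<le> K * \<beta>"
  shows "h * (x + y)\<^sup>2 \<le> 2 * (\<mu> / q) * \<beta>\<^sup>2"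
proof -
  have rearrange: "\<mu> / (2 * q * D) * (4 * K\<^sup>2 * \<beta>\<^sup>2) = 2 * (\<mu> / q) * \<beta>\<^sup>2 * (K\<^sup>2 / D)"
    if "0 < D" for D
    using q that by (simp add: field_simps)
  have "(x + y)\<^sup>2 \<le> (2 * (K * \<beta>))\<^sup>2"
    using x y by (intro power_mono) auto
  then have "h * (x + y)\<^sup>2 \<le> \<mu> / (2 * q * (K\<^sup>2 + 1)) * (4 * K\<^sup>2 * \<beta>\<^sup>2)"
    using h by (intro mult_mono) (auto simp: power_mult_distrib)
  also have "\<dots> = 2 * (\<mu> / q) * \<beta>\<^sup>2 * (K\<^sup>2 / (K\<^sup>2 + 1))"
    by (rule rearrange) (simp add: add_nonneg_pos)
  also have "\<dots> \<le> 2 * (\<mu> / q) * \<beta>\<^sup>2"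
    using q \<mu> by (intro mult_left_le) (auto simp: add_nonneg_pos)
  finally show ?thesis .
qed


section \<open>Sufficiency of the condition\<close>

lemma cp_small_coefficients:
  fixes p :: nat and w :: "nat \<Rightarrow> real^'n" and b :: "real^'n"
  assumes w: "\<And>k i. k < p \<Longrightarrow> 0 \<le> w k $ i" and b: "\<And>i. 0 < b $ i" and \<mu>: "0 < \<mu>"
    and p: "p \<noteq> 0"
  obtains \<eta> where "0 < \<eta>"
    "\<And>E H. transpose E = E \<Longrightarrow> E = (\<Sum>k<p. \<Sum>l<p. H k l *\<^sub>R outer (w k) (w l)) \<Longrightarrow>
      (\<And>k l. k < p \<Longrightarrow> l < p \<Longrightarrow> \<bar>H k l\<bar> \<le> \<eta>) \<Longrightarrow>
      (1/2) *\<^sub>R (\<Sum>k<p. outer (w k) (w k)) + \<mu> *\<^sub>R outer b b + E \<in> cp_cone"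
proof -
  obtain K where K: "\<And>k i. k < p \<Longrightarrow> w k $ i \<le> K * b $ i"
    using nonneg_dominated_by_positive[of p w b] w b by blast
  define q where "q = (real p)\<^sup>2"
  have q: "0 < q"
    using p by (simp add: q_def)
  define a where "a = sqrt (\<mu> / q) *\<^sub>R b"
  have a: "0 \<le> a $ i" "(a $ i)\<^sup>2 = \<mu> / q * (b $ i)\<^sup>2" for i
    using b[of i] \<mu> q by (simp_all add: a_def power_mult_distrib less_imp_le)
  have aa: "q *\<^sub>R outer a a = \<mu> *\<^sub>R outer b b"
    using \<mu> q by (simp add: a_def vec_eq_iff algebra_simps flip: power2_eq_square)
  define \<eta> where "\<eta> = min (1 / (2 * real p)) (\<mu> / (2 * q * (K\<^sup>2 + 1)))"
  have "0 < \<eta>"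
    using p \<mu> q by (simp add: \<eta>_def add_nonneg_pos)
  then show thesis
  proof (rule that)
    fix E H
    assume E_sym: "transpose E = E" and E_expansion: "E = (\<Sum>k<p. \<Sum>l<p. H k l *\<^sub>R outer (w k) (w l))"
      and H: "\<And>k l. k < p \<Longrightarrow> l < p \<Longrightarrow> \<bar>H k l\<bar> \<le> \<eta>"
    have "(1/2) *\<^sub>R (\<Sum>k<p. outer (w k) (w k)) + q *\<^sub>R outer a a + E \<in> cp_cone"
      unfolding q_def
    proof (rule cp_perturbation[OF w a(1) E_sym E_expansion])
      show "2 * real p * \<bar>H k l\<bar> \<le> 1" if "k < p" "l < p" for k l
        using H[OF that] p by (simp add: \<eta>_def field_simps)
      show "\<bar>H k l\<bar> * (w k $ i + w l $ i)\<^sup>2 \<le> 2 * (a $ i)\<^sup>2" if "k < p" "l < p" for k l i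
      proof -
        have "\<bar>H k l\<bar> \<le> \<mu> / (2 * q * (K\<^sup>2 + 1))"
          using H[OF that] by (simp add: \<eta>_def)
        then have "\<bar>H k l\<bar> * (w k $ i + w l $ i)\<^sup>2 \<le> 2 * (\<mu> / q) * (b $ i)\<^sup>2"
          using q \<mu> w[OF that(1)] w[OF that(2)] K[OF that(1)] K[OF that(2)]
          by (intro small_coefficient_absorbed) auto
        then show ?thesis
          by (simp add: a(2))
      qed
    qed
    then show "(1/2) *\<^sub>R (\<Sum>k<p. outer (w k) (w k)) + \<mu> *\<^sub>R outer b b + E \<in> cp_cone"
      by (simp add: aa)
  qed
qed

text \<open>Norm-level stability: if the frame matrix is invertible, a small norm of E forces small
  frame coefficients, by the frame expansion and the bilinear bound.\<close>

lemma cp_neighbourhood: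
  fixes p :: nat and w :: "nat \<Rightarrow> real^'n" and B :: "real^'n^'n" and b :: "real^'n"
  defines "S \<equiv> (\<Sum>k<p. outer (w k) (w k))"
  assumes w: "\<And>k i. k < p \<Longrightarrow> 0 \<le> w k $ i" and inverse: "B ** S = mat 1"
    and b: "\<And>i. 0 < b $ i" and \<mu>: "0 < \<mu>"
  obtains \<delta> where "0 < \<delta>"
    "\<And>E. transpose E = E \<Longrightarrow> norm E < \<delta> \<Longrightarrow> (1/2) *\<^sub>R S + \<mu> *\<^sub>R outer b b + E \<in> cp_cone"
proof -
  have "p \<noteq> 0"
  proof
    assume "p = 0"
    then have "(mat 1 :: real^'n^'n) $ i $ i = 0" for i
      using inverse by (simp add: S_def)
    then show False
      by (simp add: mat_def)
  qed
  obtain \<eta> where \<eta>: "0 < \<eta>"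
    "\<And>E H. transpose E = E \<Longrightarrow> E = (\<Sum>k<p. \<Sum>l<p. H k l *\<^sub>R outer (w k) (w l)) \<Longrightarrow>
      (\<And>k l. k < p \<Longrightarrow> l < p \<Longrightarrow> \<bar>H k l\<bar> \<le> \<eta>) \<Longrightarrow> (1/2) *\<^sub>R S + \<mu> *\<^sub>R outer b b + E \<in> cp_cone"
    using cp_small_coefficients[of p w b \<mu>] w b \<mu> \<open>p \<noteq> 0\<close> unfolding S_def by blast
  define Y where "Y = (\<Sum>k<p. norm (B *v w k))"
  have Y: "norm (B *v w k) \<le> Y" if "k < p" for k
    unfolding Y_def using that by (intro member_le_sum) auto
  have Y_nonneg: "0 \<le> Y"
    unfolding Y_def by (simp add: sum_nonneg)
  define C where "C = real CARD('n) * real CARD('n) * Y\<^sup>2 + 1"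
  have C: "0 < C"
    unfolding C_def by (simp add: add_nonneg_pos)
  show thesis
  proof
    show "0 < \<eta> / C"
      using \<eta>(1) C by simp
    fix E :: "real^'n^'n"
    assume E_sym: "transpose E = E" and E_small: "norm E < \<eta> / C"
    have coefficients_small: "\<bar>(B *v w k) \<bullet> (E *v (B *v w l))\<bar> \<le> \<eta>" if "k < p" "l < p" for k l
    proof -
      have "\<bar>(B *v w k) \<bullet> (E *v (B *v w l))\<bar>
          \<le> real CARD('n) * real CARD('n) * norm E * norm (B *v w k) * norm (B *v w l)"
        by (rule bilinear_form_bound)
      also have "\<dots> \<le> real CARD('n) * real CARD('n) * (\<eta> / C) * Y * Y"
        using E_small Y[OF that(1)] Y[OF that(2)] Y_nonneg \<eta>(1) C
        by (intro mult_mono) auto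
      also have "\<dots> = (\<eta> / C) * (real CARD('n) * real CARD('n) * Y\<^sup>2)"
        by (simp add: power2_eq_square)
      also have "\<dots> \<le> (\<eta> / C) * C"
        using \<eta>(1) C by (intro mult_left_mono) (auto simp: C_def)
      finally show ?thesis
        using C by simp
    qed
    have "E = (\<Sum>k<p. \<Sum>l<p. ((B *v w k) \<bullet> (E *v (B *v w l))) *\<^sub>R outer (w k) (w l))"
      by (rule frame_expansion) (use inverse in \<open>simp add: S_def\<close>)
    then show "(1/2) *\<^sub>R S + \<mu> *\<^sub>R outer b b + E \<in> cp_cone"
      by (rule \<eta>(2)[OF E_sym]) (rule coefficients_small)
  qed
qed

text \<open>Sufficiency: split A = \<lambda> b b^T + C into a frame with w_0 = sqrt \<lambda> b; near A, the
  perturbed matrix is half of A plus (\<lambda>/2) b b^T plus E, plus the completely positive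
  remainder (A - \<lambda> b b^T)/2.\<close>

lemma interior_cp_sufficient:
  fixes A :: "real^'n^'n" and b :: "real^'n"
  assumes rank: "rank A = CARD('n)" and b: "\<And>i. 0 < b $ i" and lam: "0 < lam"
    and rest: "A - lam *\<^sub>R outer b b \<in> cp_cone"
  shows "\<exists>\<delta>>0. \<forall>A'\<in>sym_mats. dist A' A < \<delta> \<longrightarrow> A' \<in> cp_cone"
proof -
  obtain m :: nat and c where c: "\<And>k i. k < m \<Longrightarrow> 0 \<le> c k $ i"
      "A - lam *\<^sub>R outer b b = (\<Sum>k<m. outer (c k) (c k))"
    using rest by (elim cp_coneE) blast
  define w where "w k = (if k = 0 then sqrt lam *\<^sub>R b else c (k - 1))" for k
  have w: "0 \<le> w k $ i" if "k < Suc m" for k i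
    using c(1)[of "k - 1" i] b[of i] lam that by (auto simp: w_def less_imp_le)
  have "outer (w 0) (w 0) = lam *\<^sub>R outer b b"
    using lam by (simp add: w_def vec_eq_iff algebra_simps flip: power2_eq_square)
  then have A_frame: "A = (\<Sum>k<Suc m. outer (w k) (w k))"
    using c(2) unfolding sum.lessThan_Suc_shift by (simp add: w_def algebra_simps)
  obtain B where B: "B ** A = mat 1"
    using rank full_rank_injective matrix_left_invertible_injective by metis
  obtain \<delta> where \<delta>: "0 < \<delta>"
    "\<And>E. transpose E = E \<Longrightarrow> norm E < \<delta> \<Longrightarrow> (1/2) *\<^sub>R A + (lam / 2) *\<^sub>R outer b b + E \<in> cp_cone"
    using cp_neighbourhood[of "Suc m" w B b "lam / 2"] w B b lam unfolding A_frame by auto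
  have "A' \<in> cp_cone" if A': "A' \<in> sym_mats" "dist A' A < \<delta>" for A'
  proof -
    have "transpose A = A"
      by (simp only: A_frame transpose_sum transpose_outer)
    then have "transpose (A' - A) = A' - A"
      using A'(1) by (simp add: sym_mats_def transpose_def vec_eq_iff)
    then have "(1/2) *\<^sub>R A + (lam / 2) *\<^sub>R outer b b + (A' - A) \<in> cp_cone"
      using A'(2) by (intro \<delta>(2)) (simp_all add: dist_norm)
    moreover have "(1/2) *\<^sub>R (A - lam *\<^sub>R outer b b) \<in> cp_cone"
      using rest by (rule cp_scale) simp
    ultimately have "((1/2) *\<^sub>R A + (lam / 2) *\<^sub>R outer b b + (A' - A))
        + (1/2) *\<^sub>R (A - lam *\<^sub>R outer b b) \<in> cp_cone"
      by (rule cp_add)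
    moreover have "((1/2) *\<^sub>R A + (lam / 2) *\<^sub>R outer b b + (A' - A))
        + (1/2) *\<^sub>R (A - lam *\<^sub>R outer b b) = A'"
      by (simp add: scaleR_diff_right)
    ultimately show ?thesis
      by simp
  qed
  then show ?thesis
    using \<delta>(1) by blast
qed


theorem lemma6p1:
  fixes A :: "real^'n^'n"
  assumes "A \<in> sym_mats"
  shows "A \<in> (top_of_set sym_mats) interior_of cp_cone \<longleftrightarrow>
    (rank A = CARD('n) \<and>
     (\<exists>b1 :: real^'n. \<exists>lam::real. (\<forall>i. b1 $ i > 0) \<and> lam > 0 \<and>
        A - lam *\<^sub>R outer b1 b1 \<in> cp_cone))"
  unfolding interior_cp_iff[OF assms]
proof
  assume "\<exists>e>0. \<forall>A'\<in>sym_mats. dist A' A < e \<longrightarrow> A' \<in> cp_cone"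
  then show "rank A = CARD('n) \<and> (\<exists>b1 :: real^'n. \<exists>lam::real. (\<forall>i. b1 $ i > 0) \<and> lam > 0 \<and>
      A - lam *\<^sub>R outer b1 b1 \<in> cp_cone)"
    using interior_cp_necessary[OF assms] by blast
next
  assume "rank A = CARD('n) \<and> (\<exists>b1 :: real^'n. \<exists>lam::real. (\<forall>i. b1 $ i > 0) \<and> lam > 0 \<and>
      A - lam *\<^sub>R outer b1 b1 \<in> cp_cone)"
  then show "\<exists>e>0. \<forall>A'\<in>sym_mats. dist A' A < e \<longrightarrow> A' \<in> cp_cone"
    using interior_cp_sufficient by blast
qed

end
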